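(* Consider problem (PI): minimize $f(x)$ subject to $x\in X$, $g_i(x)\le 0$, $i=1,\dots,m$, where $\Gamma\subseteq\mathbb R^n$ is an open convex set and $X\subseteq\Gamma$ is open and convex. Let $\bar S$ be its solution set and $\bar x\in\bar S$. Assume $f:\Gamma\to\mathbb R$ is continuously differentiable and quasiconvex on $\Gamma$, $g_i$ for $i\in I(\bar x)$ are differentiable and quasiconvex on $\Gamma$, $g_i$ for $i\notin I(\bar x)$ are continuous at $\bar x$, $\nabla f(\bar x)\ne 0$, MFCQ holds at $\bar x$, and $\lambda\in\mathbb R^m$ is a fixed multiplier with $\lambda_i\ge0$, $\lambda_ig_i(\bar x)=0$ for all $i$ and $\nabla f(\bar x)+\sum_{i\in I(\bar x)}\lambda_i\nabla g_i(\bar x)=0$. Define \[ \hat S_1''(\lambda):=\Big\{x\in X_1(\lambda)\ \Big|\ \nabla g_i(\bar x)^T(x-\bar x)=0\ \forall i\in\tilde I(\bar x,\lambda),\ \nabla f(x)\ne0,\ \tfrac{\nabla f(x)}{\|\nabla f(x)\|}=\tfrac{\nabla f(\bar x)}{\|\nabla f(\bar x)\|}\Big\}, \] \[ \hat S_2''(\lambda):=\Big\{x\in X_1(\lambda)\ \Big|\ \nabla g_i(\bar x)^T(x-\bar x)\ge0\ \forall i\in\tilde I(\bar x,\lambda),\ \nabla f(x)\ne0,\ \tfrac{\nabla f(x)}{\|\nabla f(x)\|}=\tfrac{\nabla f(\bar x)}{\|\nabla f(\bar x)\|}\Big\}. \] Then $\bar S=\hat S_1''(\lambda)=\hat S_2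''(\lambda)$.
   Context: Quasiconvexity on $\Gamma$: $f(x+t(y-x))\le\max\{f(x),f(y)\}$ for all $x,y\in\Gamma$, $t\in[0,1]$. Feasible set $S:=\{x\in X\mid g_i(x)\le0,\ i=1,\dots,m\}$; $\bar S$ the set of global minimizers of $f$ on $S$. Active index set $I(x):=\{i\mid g_i(x)=0\}$. MFCQ holds at $\bar x$ iff there is $y\in\mathbb R^n$ with $\nabla g_i(\bar x)^Ty<0$ for all $i\in I(\bar x)$. Define $\tilde I(\bar x,\lambda):=\{i\mid g_i(\bar x)=0,\ \lambda_i>0\}$ and $X_1(\lambda):=\{x\in X\mid g_i(x)=0\ \forall i\in\tilde I(\bar x,\lambda),\ g_i(x)\le0\ \forall i\notin\tilde I(\bar x,\lambda)\}$. *)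

theory Defs
  imports "HOL-Analysis.Analysis"
begin

definition quasiconvex_on :: "'a::real_vector set \<Rightarrow> ('a \<Rightarrow> real) \<Rightarrow> bool" where
  "quasiconvex_on \<Gamma> f \<longleftrightarrow>
     (\<forall>x\<in>\<Gamma>. \<forall>y\<in>\<Gamma>. \<forall>t::real. 0 \<le> t \<and> t \<le> 1 \<longrightarrow> f (x + t *\<^sub>R (y - x)) \<le> max (f x) (f y))"

definition feasible_set :: "'a set \<Rightarrow> nat \<Rightarrow> (nat \<Rightarrow> 'a \<Rightarrow> real) \<Rightarrow> 'a set" where
  "feasible_set X m g = {x \<in> X. \<forall>i\<in>{1..m}. g i x \<le> 0}"

definition solution_set :: "'a set \<Rightarrow> nat \<Rightarrow> (nat \<Rightarrow> 'a \<Rightarrow> real) \<Rightarrow> ('a \<Rightarrow> real) \<Rightarrow> 'a set" where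
  "solution_set X m g f = {x \<in> feasible_set X m g. \<forall>y\<in>feasible_set X m g. f x \<le> f y}"

definition active_set :: "nat \<Rightarrow> (nat \<Rightarrow> 'a \<Rightarrow> real) \<Rightarrow> 'a \<Rightarrow> nat set" where
  "active_set m g x = {i \<in> {1..m}. g i x = 0}"

definition active_pos_set :: "nat \<Rightarrow> (nat \<Rightarrow> 'a \<Rightarrow> real) \<Rightarrow> 'a \<Rightarrow> (nat \<Rightarrow> real) \<Rightarrow> nat set" where
  "active_pos_set m g xbar lam = {i \<in> {1..m}. g i xbar = 0 \<and> lam i > 0}"

definition X1 :: "'a set \<Rightarrow> nat \<Rightarrow> (nat \<Rightarrow> 'a \<Rightarrow> real) \<Rightarrow> 'a \<Rightarrow> (nat \<Rightarrow> real) \<Rightarrow> 'a set" where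
  "X1 X m g xbar lam = {x \<in> X. (\<forall>i\<in>active_pos_set m g xbar lam. g i x = 0)
       \<and> (\<forall>i\<in>{1..m} - active_pos_set m g xbar lam. g i x \<le> 0)}"

text \<open>MFCQ at xbar, with dg i xbar the gradient of g i at xbar.\<close>
definition MFCQ :: "nat \<Rightarrow> (nat \<Rightarrow> 'a \<Rightarrow> real) \<Rightarrow> (nat \<Rightarrow> 'a \<Rightarrow> 'a::real_inner) \<Rightarrow> 'a \<Rightarrow> bool" where
  "MFCQ m g dg xbar \<longleftrightarrow> (\<exists>y. \<forall>i\<in>active_set m g xbar. inner (dg i xbar) y < 0)"

definition S1'' :: "'a set \<Rightarrow> nat \<Rightarrow> (nat \<Rightarrow> 'a \<Rightarrow> real) \<Rightarrow> (nat \<Rightarrow> 'a \<Rightarrow> 'a::real_inner)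
     \<Rightarrow> ('a \<Rightarrow> 'a) \<Rightarrow> 'a \<Rightarrow> (nat \<Rightarrow> real) \<Rightarrow> 'a set" where
  "S1'' X m g dg df xbar lam = {x \<in> X1 X m g xbar lam.
      (\<forall>i\<in>active_pos_set m g xbar lam. inner (dg i xbar) (x - xbar) = 0)
      \<and> df x \<noteq> 0
      \<and> (1 / norm (df x)) *\<^sub>R df x = (1 / norm (df xbar)) *\<^sub>R df xbar}"

definition S2'' :: "'a set \<Rightarrow> nat \<Rightarrow> (nat \<Rightarrow> 'a \<Rightarrow> real) \<Rightarrow> (nat \<Rightarrow> 'a \<Rightarrow> 'a::real_inner)
     \<Rightarrow> ('a \<Rightarrow> 'a) \<Rightarrow> 'a \<Rightarrow> (nat \<Rightarrow> real) \<Rightarrow> 'a set" where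
  "S2'' X m g dg df xbar lam = {x \<in> X1 X m g xbar lam.
      (\<forall>i\<in>active_pos_set m g xbar lam. inner (dg i xbar) (x - xbar) \<ge> 0)
      \<and> df x \<noteq> 0
      \<and> (1 / norm (df x)) *\<^sub>R df x = (1 / norm (df xbar)) *\<^sub>R df xbar}"

end

theory Submission
  imports Defs
begin

text \<open>For a differentiable quasiconvex function, \<open>f x \<le> f y\<close> forces
  \<open>\<nabla>f(y)\<^sup>T(x - y) \<le> 0\<close>, strictly if \<open>f x < f y\<close> and \<open>\<nabla>f(y) \<noteq> 0\<close>. Applied to a minimizer
  \<open>x\<close> and combined with the KKT identity, this gives \<open>\<nabla>f(xbar)\<^sup>T(x - xbar) = 0\<close> and
  \<open>\<lambda>\<^sub>i \<nabla>g\<^sub>i(xbar)\<^sup>T(x - xbar) = 0\<close>, hence the tangency and binding conditions of \<open>X\<^sub>1(\<lambda>)\<close>. Since \<open>x\<close> and \<open>xbar\<close> lie on one level set with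
  \<open>\<nabla>f(xbar)\<close> orthogonal to \<open>x - xbar\<close>, \<open>f\<close> is constant on the segment between them; comparing
  \<open>f\<close> along the rays from \<open>x\<close> and from a segment point \<open>z\<close> near \<open>xbar\<close> in direction
  \<open>\<nabla>f(xbar)\<close>, quasiconvexity and continuity of \<open>\<nabla>f\<close> at \<open>xbar\<close> yield
  \<open>\<nabla>f(x)\<^sup>T\<nabla>f(xbar) > 0\<close>. Moreover every descent direction at \<open>x\<close> is one at \<open>xbar\<close>, so
  \<open>\<nabla>f(x)\<close> is a positive multiple of \<open>\<nabla>f(xbar)\<close>. Conversely, on \<open>S\<^sub>2''\<close> the KKT identity
  gives \<open>\<nabla>f(x)\<^sup>T(x - xbar) \<le> 0\<close>, which rules out \<open>f xbar < f x\<close>.\<close>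

lemma has_real_derivative_along_line:
  assumes "(\<phi> has_derivative (\<lambda>h. inner p h)) (at y)"
  shows "((\<lambda>t. \<phi> (y + t *\<^sub>R v)) has_real_derivative inner p v) (at 0)"
proof -
  have "((\<lambda>t. y + t *\<^sub>R v) has_derivative (\<lambda>t. t *\<^sub>R v)) (at 0)"
    by (auto intro!: derivative_eq_intros)
  moreover have "(\<phi> has_derivative (\<lambda>h. inner p h)) (at (y + 0 *\<^sub>R v))"
    using assms by simp
  ultimately have "((\<lambda>t. \<phi> (y + t *\<^sub>R v)) has_derivative (\<lambda>t. inner p (t *\<^sub>R v))) (at 0)"
    by (rule has_derivative_compose)
  moreover have "(\<lambda>t. inner p (t *\<^sub>R v)) = (*) (inner p v)"
    by auto
  ultimately show ?thesis
    by (simp add: has_field_derivative_def)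
qed

lemma eventually_at_right_gt_of_deriv_pos:
  fixes \<phi> :: "real \<Rightarrow> real"
  assumes "(\<phi> has_real_derivative l) (at 0)" "l > 0"
  shows "\<forall>\<^sub>F t in at_right 0. \<phi> 0 < \<phi> t"
  using DERIV_pos_inc_right[OF assms] by (auto simp: eventually_at_right_field)

lemma eventually_at_right_lt_of_deriv_neg:
  fixes \<phi> :: "real \<Rightarrow> real"
  assumes "(\<phi> has_real_derivative l) (at 0)" "l < 0"
  shows "\<forall>\<^sub>F t in at_right 0. \<phi> t < \<phi> 0"
  using DERIV_neg_dec_right[OF assms] by (auto simp: eventually_at_right_field)

lemma tendsto_along_line:
  fixes x v :: "'a::real_normed_vector"
  shows "((\<lambda>t. x + t *\<^sub>R v) \<longlongrightarrow> x) (at_right 0)"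
proof -
  have "((\<lambda>t. x + t *\<^sub>R v) \<longlongrightarrow> x + 0 *\<^sub>R v) (at_right 0)"
    by (intro tendsto_intros)
  then show ?thesis
    by simp
qed

lemma eventually_at_right_along_line_in_open:
  fixes x v :: "'a::real_normed_vector"
  assumes "open S" "x \<in> S"
  shows "\<forall>\<^sub>F t in at_right 0. x + t *\<^sub>R v \<in> S"
  using tendsto_along_line assms by (rule topological_tendstoD)

lemma quasiconvex_on_gradient_nonpos:
  fixes \<phi> :: "'a::real_inner \<Rightarrow> real"
  assumes qc: "quasiconvex_on \<Gamma> \<phi>" and "x \<in> \<Gamma>" "y \<in> \<Gamma>"
    and der: "(\<phi> has_derivative (\<lambda>h. inner p h)) (at y)" and le: "\<phi> x \<le> \<phi> y"
  shows "inner p (x - y) \<le> 0"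
proof (rule ccontr)
  assume "\<not> inner p (x - y) \<le> 0"
  then have "\<forall>\<^sub>F t in at_right 0. \<phi> y < \<phi> (y + t *\<^sub>R (x - y))"
    using eventually_at_right_gt_of_deriv_pos[OF has_real_derivative_along_line[OF der]] by simp
  moreover have "\<forall>\<^sub>F t in at_right 0. t \<in> {0<..<1::real}"
    by (rule eventually_at_right_real) simp
  ultimately have "\<forall>\<^sub>F t in at_right 0. \<phi> y < \<phi> (y + t *\<^sub>R (x - y)) \<and> t \<in> {0<..<1}"
    by (rule eventually_conj)
  then obtain t where "\<phi> y < \<phi> (y + t *\<^sub>R (x - y))" "0 < t" "t < 1"
    using eventually_happens'[OF trivial_limit_at_right_real] by auto
  moreover have "\<phi> (y + t *\<^sub>R (x - y)) \<le> max (\<phi> y) (\<phi> x)"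
    using qc assms(2,3) \<open>0 < t\<close> \<open>t < 1\<close> unfolding quasiconvex_on_def by simp
  ultimately show False using le by simp
qed

lemma quasiconvex_on_gradient_neg:
  fixes \<phi> :: "'a::real_inner \<Rightarrow> real"
  assumes qc: "quasiconvex_on \<Gamma> \<phi>" and "open \<Gamma>" "x \<in> \<Gamma>" "y \<in> \<Gamma>"
    and der: "(\<phi> has_derivative (\<lambda>h. inner p h)) (at y)" and "p \<noteq> 0"
    and "isCont \<phi> x" and "\<phi> x < \<phi> y"
  shows "inner p (x - y) < 0"
proof -
  have "\<forall>\<^sub>F s in at_right 0. x + s *\<^sub>R p \<in> \<Gamma> \<and> \<phi> (x + s *\<^sub>R p) < \<phi> y \<and> 0 < s"
    using eventually_at_right_along_line_in_open[OF \<open>open \<Gamma>\<close> \<open>x \<in> \<Gamma>\<close>]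
      order_tendstoD(2)[OF isCont_tendsto_compose[OF \<open>isCont \<phi> x\<close> tendsto_along_line] \<open>\<phi> x < \<phi> y\<close>]
      eventually_at_right_less
    by (intro eventually_conj)
  then obtain s where "x + s *\<^sub>R p \<in> \<Gamma>" "\<phi> (x + s *\<^sub>R p) < \<phi> y" "0 < s"
    using eventually_happens'[OF trivial_limit_at_right_real] by auto
  then have "inner p (x + s *\<^sub>R p - y) \<le> 0"
    using quasiconvex_on_gradient_nonpos[OF qc _ \<open>y \<in> \<Gamma>\<close> der] by simp
  moreover have "s * inner p p > 0" using \<open>0 < s\<close> \<open>p \<noteq> 0\<close> by simp
  ultimately show ?thesis by (simp add: inner_diff_right inner_add_right)
qed

lemma pos_multiple_of_halfspace_subset:
  fixes u w :: "'a::real_inner"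
  assumes "w \<noteq> 0" and halfspace: "\<And>v. inner w v < 0 \<Longrightarrow> inner u v < 0"
  obtains a where "a > 0" "u = a *\<^sub>R w"
proof
  have "inner u w > 0"
    using halfspace[of "- w"] \<open>w \<noteq> 0\<close> by simp
  define a where "a = inner u w / inner w w"
  show "a > 0"
    using \<open>inner u w > 0\<close> \<open>w \<noteq> 0\<close> by (simp add: a_def)
  define q where "q = u - a *\<^sub>R w"
  have "inner w q = 0"
    using \<open>w \<noteq> 0\<close> by (simp add: q_def a_def inner_diff_right inner_commute)
  then have "inner u q = inner q q"
    by (simp add: q_def inner_diff_left inner_commute)
  have "q = 0"
  proof (rule ccontr)
    assume "q \<noteq> 0"
    \<comment> \<open>tilting \<open>q\<close> slightly towards \<open>- w\<close> enters the half-space of \<open>w\<close>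
       while keeping the inner product with \<open>u\<close> at zero\<close>
    define e where "e = inner q q / inner u w"
    have "inner w (q - e *\<^sub>R w) < 0"
      using \<open>q \<noteq> 0\<close> \<open>w \<noteq> 0\<close> \<open>inner u w > 0\<close> \<open>inner w q = 0\<close>
      by (simp add: e_def inner_diff_right)
    moreover have "inner u (q - e *\<^sub>R w) = 0"
      using \<open>inner u w > 0\<close> \<open>inner u q = inner q q\<close> by (simp add: e_def inner_diff_right)
    ultimately show False
      using halfspace by fastforce
  qed
  then show "u = a *\<^sub>R w"
    by (simp add: q_def)
qed

lemma inner_nonpos_if_sgn_eq:
  fixes a b :: "'a::real_inner"
  assumes "sgn a = sgn b" "inner b v \<le> 0"
  shows "inner a v \<le> 0"
proof -
  have "inner a v = norm a * inner (sgn a) v"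
    by (cases "a = 0") (simp_all add: sgn_div_norm)
  also have "\<dots> = norm a * (inner b v / norm b)"
    using assms(1) by (simp add: sgn_div_norm divide_inverse_commute)
  finally show ?thesis
    using assms(2) by (simp add: mult_nonneg_nonpos divide_nonpos_nonneg)
qed

lemma scaleR_one_div_norm: "(1 / norm x) *\<^sub>R x = sgn x"
  by (simp add: sgn_div_norm inverse_eq_divide)

locale differentiable_quasiconvex =
  fixes \<Gamma> :: "'a::real_inner set" and f :: "'a \<Rightarrow> real" and df :: "'a \<Rightarrow> 'a"
  assumes open_domain: "open \<Gamma>" and convex_domain: "convex \<Gamma>"
    and has_derivative: "\<And>x. x \<in> \<Gamma> \<Longrightarrow> (f has_derivative (\<lambda>h. inner (df x) h)) (at x)"
    and quasiconvex: "quasiconvex_on \<Gamma> f"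
begin

lemma continuous_at: "x \<in> \<Gamma> \<Longrightarrow> isCont f x"
  using has_derivative has_derivative_continuous by blast

lemma gradient_nonpos: "x \<in> \<Gamma> \<Longrightarrow> y \<in> \<Gamma> \<Longrightarrow> f x \<le> f y \<Longrightarrow> inner (df y) (x - y) \<le> 0"
  using quasiconvex_on_gradient_nonpos[OF quasiconvex _ _ has_derivative] by blast

lemma gradient_neg:
  "x \<in> \<Gamma> \<Longrightarrow> y \<in> \<Gamma> \<Longrightarrow> df y \<noteq> 0 \<Longrightarrow> f x < f y \<Longrightarrow> inner (df y) (x - y) < 0"
  using quasiconvex_on_gradient_neg[OF quasiconvex open_domain _ _ has_derivative _ continuous_at] by blast

lemma segment_in_domain:
  assumes "x \<in> \<Gamma>" "y \<in> \<Gamma>" "0 \<le> t" "t \<le> 1"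
  shows "y + t *\<^sub>R (x - y) \<in> \<Gamma>"
proof -
  have "y + t *\<^sub>R (x - y) = (1 - t) *\<^sub>R y + t *\<^sub>R x"
    by (simp add: algebra_simps)
  then show ?thesis
    using convex_domain assms by (simp add: convex_alt)
qed

lemma constant_on_level_segment:
  assumes "x \<in> \<Gamma>" "y \<in> \<Gamma>" "df y \<noteq> 0" "f x = f y" "inner (df y) (x - y) = 0"
    and "0 \<le> t" "t \<le> 1"
  shows "f (y + t *\<^sub>R (x - y)) = f y"
proof -
  have z: "y + t *\<^sub>R (x - y) \<in> \<Gamma>"
    using segment_in_domain assms by simp
  have "f (y + t *\<^sub>R (x - y)) \<le> f y"
    using quasiconvex assms unfolding quasiconvex_on_def by force
  moreover have "\<not> f (y + t *\<^sub>R (x - y)) < f y"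
    using gradient_neg[OF z \<open>y \<in> \<Gamma>\<close> \<open>df y \<noteq> 0\<close>] \<open>inner (df y) (x - y) = 0\<close> by auto
  ultimately show ?thesis by simp
qed

lemma level_set_directional_derivative_le:
  assumes "x \<in> \<Gamma>" "y \<in> \<Gamma>" "0 < s" "s \<le> 1" "f x = f y" "f (y + s *\<^sub>R (x - y)) = f y"
    and "s * inner (df (y + s *\<^sub>R (x - y))) u > 0"
  shows "s * inner (df (y + s *\<^sub>R (x - y))) u \<le> inner (df x) u"
proof (rule ccontr)
  define z where "z = y + s *\<^sub>R (x - y)"
  assume "\<not> s * inner (df (y + s *\<^sub>R (x - y))) u \<le> inner (df x) u"
  then have faster: "inner (df x) u - s * inner (df z) u < 0"
    by (simp add: z_def)
  have "z \<in> \<Gamma>"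
    using segment_in_domain assms(1-4) by (simp add: z_def)
  \<comment> \<open>Quasiconvexity bounds \<open>g\<close> by \<open>max (f y) h\<close>, although \<open>g\<close> starts off faster than both.\<close>
  define g where "g = (\<lambda>\<delta>. f (z + \<delta> *\<^sub>R (s *\<^sub>R u)))"
  define h where "h = (\<lambda>\<delta>. f (x + \<delta> *\<^sub>R u))"
  have g': "(g has_real_derivative s * inner (df z) u) (at 0)"
    using has_real_derivative_along_line[OF has_derivative[OF \<open>z \<in> \<Gamma>\<close>], of "s *\<^sub>R u"]
    by (simp add: g_def)
  have h': "(h has_real_derivative inner (df x) u) (at 0)"
    using has_real_derivative_along_line[OF has_derivative[OF \<open>x \<in> \<Gamma>\<close>], of u]
    by (simp add: h_def)
  have "\<forall>\<^sub>F \<delta> in at_right 0. g 0 < g \<delta>"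
    using g' by (rule eventually_at_right_gt_of_deriv_pos) (use assms(7) in \<open>simp add: z_def\<close>)
  moreover have "\<forall>\<^sub>F \<delta> in at_right 0. (\<lambda>\<delta>. h \<delta> - g \<delta>) \<delta> < h 0 - g 0"
    using DERIV_diff[OF h' g'] faster by (rule eventually_at_right_lt_of_deriv_neg)
  moreover have "\<forall>\<^sub>F \<delta> in at_right 0. x + \<delta> *\<^sub>R u \<in> \<Gamma>"
    using open_domain \<open>x \<in> \<Gamma>\<close> by (rule eventually_at_right_along_line_in_open)
  ultimately have "\<forall>\<^sub>F \<delta> in at_right 0. g 0 < g \<delta> \<and> h \<delta> - g \<delta> < h 0 - g 0 \<and> x + \<delta> *\<^sub>R u \<in> \<Gamma>"
    by (intro eventually_conj) simp_all
  then obtain \<delta> where "g 0 < g \<delta>" "h \<delta> - g \<delta> < h 0 - g 0" "x + \<delta> *\<^sub>R u \<in> \<Gamma>"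
    using eventually_happens'[OF trivial_limit_at_right_real] by auto
  moreover have "g \<delta> \<le> max (f y) (h \<delta>)"
  proof -
    have "z + \<delta> *\<^sub>R (s *\<^sub>R u) = y + s *\<^sub>R ((x + \<delta> *\<^sub>R u) - y)"
      by (simp add: z_def algebra_simps)
    then show ?thesis
      using quasiconvex \<open>y \<in> \<Gamma>\<close> \<open>x + \<delta> *\<^sub>R u \<in> \<Gamma>\<close> assms(3,4)
      unfolding quasiconvex_on_def g_def h_def by simp
  qed
  moreover have "g 0 = f y" "h 0 = f y"
    using assms(5,6) by (simp_all add: g_def h_def z_def)
  ultimately show False by linarith
qed

lemma level_set_gradient_inner_pos:
  assumes "x \<in> \<Gamma>" "y \<in> \<Gamma>" "isCont df y" "df y \<noteq> 0" "f x = f y" "inner (df y) (x - y) = 0"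
  shows "inner (df x) (df y) > 0"
proof -
  have "((\<lambda>s. df (y + s *\<^sub>R (x - y))) \<longlongrightarrow> df y) (at_right 0)"
    using isCont_tendsto_compose[OF \<open>isCont df y\<close> tendsto_along_line] by simp
  then have "((\<lambda>s. inner (df (y + s *\<^sub>R (x - y))) (df y)) \<longlongrightarrow> inner (df y) (df y)) (at_right 0)"
    by (rule tendsto_inner[OF _ tendsto_const])
  then have "\<forall>\<^sub>F s in at_right 0. inner (df (y + s *\<^sub>R (x - y))) (df y) > 0"
    by (rule order_tendstoD(1)) (simp add: \<open>df y \<noteq> 0\<close>)
  moreover have "\<forall>\<^sub>F s in at_right 0. s \<in> {0<..<1::real}"
    by (rule eventually_at_right_real) simp
  ultimately have "\<forall>\<^sub>F s in at_right 0. inner (df (y + s *\<^sub>R (x - y))) (df y) > 0 \<and> s \<in> {0<..<1}"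
    by (rule eventually_conj)
  then obtain s where s: "0 < s" "s < 1" and "inner (df (y + s *\<^sub>R (x - y))) (df y) > 0"
    using eventually_happens'[OF trivial_limit_at_right_real] by auto
  then have pos: "s * inner (df (y + s *\<^sub>R (x - y))) (df y) > 0"
    by simp
  moreover have "f (y + s *\<^sub>R (x - y)) = f y"
    using constant_on_level_segment assms s by simp
  ultimately show ?thesis
    using level_set_directional_derivative_le[OF assms(1,2) \<open>0 < s\<close> _ \<open>f x = f y\<close>] s by force
qed

lemma level_set_halfspace_subset:
  assumes "x \<in> \<Gamma>" "y \<in> \<Gamma>" "df y \<noteq> 0" "f x = f y" "inner (df y) (x - y) = 0"
    and "inner (df x) w < 0"
  shows "inner (df y) w < 0"
proof -
  have "\<forall>\<^sub>F t in at_right 0. f (x + t *\<^sub>R w) < f (x + 0 *\<^sub>R w)"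
    using has_real_derivative_along_line[OF has_derivative[OF \<open>x \<in> \<Gamma>\<close>]] assms(6)
    by (rule eventually_at_right_lt_of_deriv_neg)
  moreover have "\<forall>\<^sub>F t in at_right 0. x + t *\<^sub>R w \<in> \<Gamma>"
    using open_domain \<open>x \<in> \<Gamma>\<close> by (rule eventually_at_right_along_line_in_open)
  ultimately have "\<forall>\<^sub>F t in at_right 0. f (x + t *\<^sub>R w) < f x \<and> x + t *\<^sub>R w \<in> \<Gamma> \<and> 0 < t"
    using eventually_at_right_less by (intro eventually_conj) simp_all
  then obtain t where "f (x + t *\<^sub>R w) < f y" "x + t *\<^sub>R w \<in> \<Gamma>" "0 < t"
    using eventually_happens'[OF trivial_limit_at_right_real] \<open>f x = f y\<close> by auto
  then have "inner (df y) (x + t *\<^sub>R w - y) < 0"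
    using gradient_neg \<open>y \<in> \<Gamma>\<close> \<open>df y \<noteq> 0\<close> by blast
  then have "t * inner (df y) w < 0"
    using \<open>inner (df y) (x - y) = 0\<close> by (simp add: inner_diff_right inner_add_right)
  then show ?thesis
    using \<open>0 < t\<close> by (simp add: mult_less_0_iff)
qed

lemma level_set_sgn_gradient_eq:
  assumes "x \<in> \<Gamma>" "y \<in> \<Gamma>" "isCont df y" "df y \<noteq> 0" "f x = f y" "inner (df y) (x - y) = 0"
  shows "df x \<noteq> 0" "sgn (df x) = sgn (df y)"
proof -
  show "df x \<noteq> 0"
    using level_set_gradient_inner_pos[OF assms] by auto
  then obtain a where "a > 0" "df y = a *\<^sub>R df x"
    using pos_multiple_of_halfspace_subset level_set_halfspace_subset[OF assms(1,2,4-6)] by metis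
  then show "sgn (df x) = sgn (df y)"
    by (simp add: sgn_scaleR)
qed

end

lemma finite_active_set: "finite (active_set m g x)"
  by (simp add: active_set_def)

locale quasiconvex_kkt_point = differentiable_quasiconvex \<Gamma> f df
  for \<Gamma> :: "'a::real_inner set" and f df +
  fixes X :: "'a set" and m :: nat and g :: "nat \<Rightarrow> 'a \<Rightarrow> real" and dg :: "nat \<Rightarrow> 'a \<Rightarrow> 'a"
    and xbar :: 'a and lam :: "nat \<Rightarrow> real"
  assumes X_subset: "X \<subseteq> \<Gamma>"
    and xbar_solution: "xbar \<in> solution_set X m g f"
    and isCont_df_xbar: "isCont df xbar" and df_xbar_nonzero: "df xbar \<noteq> 0"
    and active_constraint:
      "\<And>i. i \<in> active_set m g xbar \<Longrightarrow> differentiable_quasiconvex \<Gamma> (g i) (dg i)"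
    and dg_xbar_nonzero: "\<And>i. i \<in> active_set m g xbar \<Longrightarrow> dg i xbar \<noteq> 0"
    and multiplier_nonneg: "\<And>i. i \<in> {1..m} \<Longrightarrow> lam i \<ge> 0"
    and KKT: "df xbar + (\<Sum>i\<in>active_set m g xbar. lam i *\<^sub>R dg i xbar) = 0"
begin

lemma xbar_in_domain: "xbar \<in> \<Gamma>"
  using xbar_solution X_subset by (auto simp: solution_set_def feasible_set_def)

lemma solution_value: "x \<in> solution_set X m g f \<Longrightarrow> f x = f xbar"
  using xbar_solution by (auto simp: solution_set_def intro: antisym)

lemma inner_df_xbar:
  "inner (df xbar) v = - (\<Sum>i\<in>active_set m g xbar. lam i * inner (dg i xbar) v)"
proof -
  have "df xbar = - (\<Sum>i\<in>active_set m g xbar. lam i *\<^sub>R dg i xbar)"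
    using KKT by (simp add: eq_neg_iff_add_eq_0)
  then show ?thesis
    by (simp add: inner_sum_left)
qed

lemma solution_directions:
  assumes x: "x \<in> solution_set X m g f"
  shows "inner (df xbar) (x - xbar) = 0"
    and "\<And>i. i \<in> active_set m g xbar \<Longrightarrow> lam i * inner (dg i xbar) (x - xbar) = 0"
proof -
  have "x \<in> \<Gamma>" and feasible: "\<And>i. i \<in> {1..m} \<Longrightarrow> g i x \<le> 0"
    using x X_subset by (auto simp: solution_set_def feasible_set_def)
  have term_nonneg: "- (lam i * inner (dg i xbar) (x - xbar)) \<ge> 0"
    if i: "i \<in> active_set m g xbar" for i
  proof -
    interpret gi: differentiable_quasiconvex \<Gamma> "g i" "dg i"
      using active_constraint[OF i] .
    have "inner (dg i xbar) (x - xbar) \<le> 0"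
      using gi.gradient_nonpos[OF \<open>x \<in> \<Gamma>\<close> xbar_in_domain] feasible i
      by (simp add: active_set_def)
    then show ?thesis
      using multiplier_nonneg i by (simp add: active_set_def mult_nonneg_nonpos)
  qed
  have "inner (df xbar) (x - xbar) \<le> 0"
    using gradient_nonpos[OF \<open>x \<in> \<Gamma>\<close> xbar_in_domain] solution_value[OF x] by simp
  moreover have as_sum: "inner (df xbar) (x - xbar) = (\<Sum>i\<in>active_set m g xbar. - (lam i * inner (dg i xbar) (x - xbar)))"
    by (simp add: inner_df_xbar sum_negf)
  moreover have "(\<Sum>i\<in>active_set m g xbar. - (lam i * inner (dg i xbar) (x - xbar))) \<ge> 0"
    using term_nonneg by (simp add: sum_nonneg)
  ultimately show zero: "inner (df xbar) (x - xbar) = 0"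
    by linarith
  show "lam i * inner (dg i xbar) (x - xbar) = 0" if "i \<in> active_set m g xbar" for i
    using sum_nonneg_eq_0_iff[OF finite_active_set[of m g xbar], where f = "\<lambda>i. - (lam i * inner (dg i xbar) (x - xbar))"]
      term_nonneg zero as_sum that by simp
qed

lemma solution_subset_S1'': "solution_set X m g f \<subseteq> S1'' X m g dg df xbar lam"
proof
  fix x assume x: "x \<in> solution_set X m g f"
  have "x \<in> X" "x \<in> \<Gamma>" and feasible: "\<And>i. i \<in> {1..m} \<Longrightarrow> g i x \<le> 0"
    using x X_subset by (auto simp: solution_set_def feasible_set_def)
  have tangent: "inner (dg i xbar) (x - xbar) = 0" if i: "i \<in> active_pos_set m g xbar lam" for i
    using solution_directions(2)[OF x, of i] i by (simp add: active_pos_set_def active_set_def)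
  have binding: "g i x = 0" if i: "i \<in> active_pos_set m g xbar lam" for i
  proof (rule ccontr)
    have active: "i \<in> active_set m g xbar"
      using i by (simp add: active_pos_set_def active_set_def)
    interpret gi: differentiable_quasiconvex \<Gamma> "g i" "dg i"
      using active_constraint[OF active] .
    assume "g i x \<noteq> 0"
    then have "g i x < g i xbar"
      using feasible active by (force simp: active_set_def)
    then have "inner (dg i xbar) (x - xbar) < 0"
      using gi.gradient_neg \<open>x \<in> \<Gamma>\<close> xbar_in_domain dg_xbar_nonzero[OF active] by blast
    then show False
      using tangent[OF i] by simp
  qed
  have "x \<in> X1 X m g xbar lam"
    using \<open>x \<in> X\<close> binding feasible by (simp add: X1_def)
  moreover have "df x \<noteq> 0" "sgn (df x) = sgn (df xbar)"
    using level_set_sgn_gradient_eq[OF \<open>x \<in> \<Gamma>\<close> xbar_in_domain isCont_df_xbar df_xbar_nonzero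
        solution_value[OF x] solution_directions(1)[OF x]] by auto
  ultimately show "x \<in> S1'' X m g dg df xbar lam"
    using tangent by (simp add: S1''_def scaleR_one_div_norm)
qed

lemma S2''_subset_solution: "S2'' X m g dg df xbar lam \<subseteq> solution_set X m g f"
proof
  fix x assume x: "x \<in> S2'' X m g dg df xbar lam"
  then have "x \<in> X1 X m g xbar lam" and "df x \<noteq> 0" and "sgn (df x) = sgn (df xbar)"
    and ascent: "\<And>i. i \<in> active_pos_set m g xbar lam \<Longrightarrow> inner (dg i xbar) (x - xbar) \<ge> 0"
    by (auto simp: S2''_def scaleR_one_div_norm)
  then have "x \<in> X" and feasible: "x \<in> feasible_set X m g"
    by (auto simp: X1_def feasible_set_def active_pos_set_def)
  then have "x \<in> \<Gamma>"
    using X_subset by auto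
  have "lam i * inner (dg i xbar) (x - xbar) \<ge> 0" if i: "i \<in> active_set m g xbar" for i
  proof (cases "lam i > 0")
    case True
    then show ?thesis
      using ascent i by (simp add: active_pos_set_def active_set_def)
  next
    case False
    then have "lam i = 0"
      using multiplier_nonneg i by (force simp: active_set_def)
    then show ?thesis by simp
  qed
  then have "inner (df xbar) (x - xbar) \<le> 0"
    by (simp add: inner_df_xbar sum_nonneg)
  then have "inner (df x) (x - xbar) \<le> 0"
    using inner_nonpos_if_sgn_eq \<open>sgn (df x) = sgn (df xbar)\<close> by blast
  then have "\<not> inner (df x) (xbar - x) < 0"
    by (simp add: inner_diff_right)
  then have "f x \<le> f xbar"
    using gradient_neg[OF xbar_in_domain \<open>x \<in> \<Gamma>\<close> \<open>df x \<noteq> 0\<close>] by fastforce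
  then show "x \<in> solution_set X m g f"
    using feasible xbar_solution by (force simp: solution_set_def)
qed

end

theorem theorem6:
  fixes \<Gamma> X :: "'a::euclidean_space set"
    and f :: "'a \<Rightarrow> real" and df :: "'a \<Rightarrow> 'a"
    and m :: nat and g :: "nat \<Rightarrow> 'a \<Rightarrow> real" and dg :: "nat \<Rightarrow> 'a \<Rightarrow> 'a"
    and xbar :: 'a and lam :: "nat \<Rightarrow> real"
  assumes "open \<Gamma>" and "convex \<Gamma>"
    and "open X" and "convex X" and "X \<subseteq> \<Gamma>"
    and xbar: "xbar \<in> solution_set X m g f"
    and f_diff: "\<forall>x\<in>\<Gamma>. (f has_derivative (\<lambda>h. inner (df x) h)) (at x)"
    and f_C1: "continuous_on \<Gamma> df"
    and f_qc: "quasiconvex_on \<Gamma> f"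
    and g_act_diff: "\<forall>i\<in>active_set m g xbar. \<forall>x\<in>\<Gamma>.
                        (g i has_derivative (\<lambda>h. inner (dg i x) h)) (at x)"
    and g_act_qc: "\<forall>i\<in>active_set m g xbar. quasiconvex_on \<Gamma> (g i)"
    and g_inact_cont: "\<forall>i\<in>{1..m} - active_set m g xbar. isCont (g i) xbar"
    and "df xbar \<noteq> 0"
    and "MFCQ m g dg xbar"
    and lam_nonneg: "\<forall>i\<in>{1..m}. lam i \<ge> 0"
    and compl: "\<forall>i\<in>{1..m}. lam i * g i xbar = 0"
    and KKT: "df xbar + (\<Sum>i\<in>active_set m g xbar. lam i *\<^sub>R dg i xbar) = 0"
  shows "solution_set X m g f = S1'' X m g dg df xbar lam
       \<and> S1'' X m g dg df xbar lam = S2'' X m g dg df xbar lam"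
proof -
  have "xbar \<in> \<Gamma>"
    using xbar \<open>X \<subseteq> \<Gamma>\<close> by (auto simp: solution_set_def feasible_set_def)
  have "differentiable_quasiconvex \<Gamma> f df"
    using assms by unfold_locales auto
  moreover have "differentiable_quasiconvex \<Gamma> (g i) (dg i)" if "i \<in> active_set m g xbar" for i
    using g_act_diff g_act_qc that \<open>open \<Gamma>\<close> \<open>convex \<Gamma>\<close> by unfold_locales auto
  moreover have "isCont df xbar"
    using f_C1 \<open>open \<Gamma>\<close> \<open>xbar \<in> \<Gamma>\<close> continuous_on_eq_continuous_at by blast
  moreover have "dg i xbar \<noteq> 0" if "i \<in> active_set m g xbar" for i
    using \<open>MFCQ m g dg xbar\<close> that unfolding MFCQ_def by force
  ultimately interpret quasiconvex_kkt_point \<Gamma> f df X m g dg xbar lam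
    using assms by (intro quasiconvex_kkt_point.intro quasiconvex_kkt_point_axioms.intro) auto
  have "S1'' X m g dg df xbar lam \<subseteq> S2'' X m g dg df xbar lam"
    by (auto simp: S1''_def S2''_def)
  then show ?thesis
    using solution_subset_S1'' S2''_subset_solution by blast
qed

end
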